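(* Let $K\subseteq\mathbb{R}^n$ be a proper cone and let $A\in\mathbb{R}^{n\times n}$ be $K$-monotone. Let $A=U-V$ be a $K$-regular splitting, with $U\geq_K 0$. Let $U=F-G=\overline{F}-\overline{G}$ be two $K$-weak regular splittings of type II of $U$ such that $VF^{-1}G=GF^{-1}V$ and $V\overline{F}^{-1}\overline{G}=\overline{G}\,\overline{F}^{-1}V$. For a positive integer $s$ let $$T_{s}=(F^{-1}G)^{s}+\sum_{j=0}^{s-1}(F^{-1}G)^{j}F^{-1}V,\qquad \overline{T}_{s}=(\overline{F}^{-1}\overline{G})^{s}+\sum_{j=0}^{s-1}(\overline{F}^{-1}\overline{G})^{j}\overline{F}^{-1}V.$$ If $\overline{G}\,\overline{F}^{-1}\geq_K GF^{-1}$, then $\rho(T_s)\leq\rho(\overline{T}_s)<1$.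
   Context: A proper cone $K\subseteq\mathbb{R}^n$ is a closed, convex, pointed, solid cone. For $M\in\mathbb{R}^{n\times n}$, $M\geq_K 0$ means $MK\subseteq K$, and $M\geq_K N$ means $M-N\geq_K0$. A matrix $A$ is $K$-monotone if $A$ is nonsingular and $A^{-1}\geq_K 0$. A splitting $A=U-V$ (with $U$ nonsingular) is $K$-regular if $U^{-1}\geq_K 0$ and $V\geq_K 0$; it is a $K$-weak regular splitting of type II if $U^{-1}\geq_K 0$ and $VU^{-1}\geq_K 0$. $\rho$ denotes spectral radius. *)

theory Defs
  imports "HOL-Analysis.Analysis"
begin

definition proper_cone :: "(real^'n) set \<Rightarrow> bool" where
  "proper_cone K \<longleftrightarrow> cone K \<and> closed K \<and> convex K \<and> K \<inter> uminus ` K = {0} \<and> interior K \<noteq> {}"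

definition K_nonneg :: "(real^'n) set \<Rightarrow> real^'n^'n \<Rightarrow> bool" where
  "K_nonneg K M \<longleftrightarrow> (\<forall>x\<in>K. M *v x \<in> K)"

definition K_ge :: "(real^'n) set \<Rightarrow> real^'n^'n \<Rightarrow> real^'n^'n \<Rightarrow> bool" where
  "K_ge K M N \<longleftrightarrow> K_nonneg K (M - N)"

definition K_monotone :: "(real^'n) set \<Rightarrow> real^'n^'n \<Rightarrow> bool" where
  "K_monotone K A \<longleftrightarrow> invertible A \<and> K_nonneg K (matrix_inv A)"

definition K_regular_splitting :: "(real^'n) set \<Rightarrow> real^'n^'n \<Rightarrow> real^'n^'n \<Rightarrow> real^'n^'n \<Rightarrow> bool" where
  "K_regular_splitting K A U V \<longleftrightarrow> A = U - V \<and> invertible U \<and> K_nonneg K (matrix_inv U) \<and> K_nonneg K V"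

definition K_weak_regular_splitting_II :: "(real^'n) set \<Rightarrow> real^'n^'n \<Rightarrow> real^'n^'n \<Rightarrow> real^'n^'n \<Rightarrow> bool" where
  "K_weak_regular_splitting_II K A U V \<longleftrightarrow> A = U - V \<and> invertible U \<and> K_nonneg K (matrix_inv U)
      \<and> K_nonneg K (V ** matrix_inv U)"

primrec matpow :: "real^'n^'n \<Rightarrow> nat \<Rightarrow> real^'n^'n" where
  "matpow M 0 = mat 1"
| "matpow M (Suc k) = M ** matpow M k"

definition complexify :: "real^'n^'n \<Rightarrow> complex^'n^'n" where
  "complexify M = (\<chi> i j. complex_of_real (M $ i $ j))"

definition eigenvalues :: "real^'n^'n \<Rightarrow> complex set" where
  "eigenvalues M = {c. \<exists>v. v \<noteq> 0 \<and> complexify M *v v = c *s v}"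

definition spectral_radius :: "real^'n^'n \<Rightarrow> real" where
  "spectral_radius M = Max (cmod ` eigenvalues M)"

end

theory Submission
  imports Defs "HOL-Computational_Algebra.Polynomial"
begin

text \<open>
  Everything rests on a finite-dimensional Krein--Rutman theorem: if \<open>M\<close> maps the proper
  cone \<open>K\<close> into itself, then rho(M) is an eigenvalue of \<open>M\<close> with an eigenvector in \<open>K\<close>
  (a limit of Brouwer fixed points of x |-> M x + eps e on a compact section of \<open>K\<close>), and
  t d - M d in K with t > rho(M) forces d in K.

  With P = G F^-1, the matrix T_s is similar to Q = P^s + sum_{j<s} P^j V F^-1, and the
  commutation hypothesis gives the factorization I - Q = (A U^-1)(I - P^s), where
  rho(P^s) < 1 and (A U^-1)^-1 = U A^-1 is K-nonnegative. A K-nonnegative Q with such a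
  factorization has rho(Q) < 1, and two such factorizations with the same left factor and
  P^s <=_K Pb^s give rho(Q) <= rho(Qb).
\<close>

lemma matrix_inv_left: "invertible (A::real^'n^'n) \<Longrightarrow> matrix_inv A ** A = mat 1"
  unfolding invertible_def matrix_inv_def by (rule someI2_ex) auto

lemma matrix_inv_right: "invertible (A::real^'n^'n) \<Longrightarrow> A ** matrix_inv A = mat 1"
  unfolding invertible_def matrix_inv_def by (rule someI2_ex) auto

lemma matrix_inv_cancel_right:
  assumes "invertible (F::real^'n^'n)"
  shows "X ** F ** matrix_inv F = X" and "X ** matrix_inv F ** F = X"
  by (simp_all add: matrix_mul_assoc[symmetric] matrix_inv_right[OF assms] matrix_inv_left[OF
      assms])

lemma matrix_add_rdistrib: "((A::real^'n^'n) + B) ** C = A ** C + B ** C"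
  by (simp add: vec_eq_iff matrix_matrix_mult_def sum.distrib algebra_simps)

lemma matrix_diff_ldistrib: "(C::real^'n^'n) ** (A - B) = C ** A - C ** B"
  by (simp add: vec_eq_iff matrix_matrix_mult_def sum_subtractf algebra_simps)

lemma matrix_diff_rdistrib: "((A::real^'n^'n) - B) ** C = A ** C - B ** C"
  by (simp add: vec_eq_iff matrix_matrix_mult_def sum_subtractf algebra_simps)

lemma matrix_sum_ldistrib: "(C::real^'n^'n) ** sum (f :: _ \<Rightarrow> real^'n^'n) S = (\<Sum>i\<in>S. C ** f i)"
  by (induction S rule: infinite_finite_induct) (auto simp: matrix_add_ldistrib)

lemma matrix_sum_rdistrib: "sum (f :: _ \<Rightarrow> real^'n^'n) S ** (C::real^'n^'n) = (\<Sum>i\<in>S. f i ** C)"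
  by (induction S rule: infinite_finite_induct) (auto simp: matrix_add_rdistrib)

lemma matrix_vector_mult_sum_rdistrib:
  "sum (f :: _ \<Rightarrow> real^'n^'n) S *v (x::real^'n) = (\<Sum>i\<in>S. f i *v x)"
  by (induction S rule: infinite_finite_induct) (auto simp: matrix_vector_mult_add_rdistrib)

lemma matrix_vector_mult_neg: "(A::real^'n^'n) *v (- x) = - (A *v x)"
  by (metis diff_0 matrix_vector_mult_0_right matrix_vector_mult_diff_distrib)

lemma matrix_vector_mult_mat_1_diff: "(mat 1 - Q) *v (x::real^'n) = x - Q *v x"
  by (simp add: matrix_vector_mult_diff_rdistrib)

lemma factor_mat_1_diff_apply:
  "(M::real^'n^'n) ** (mat 1 - A) = mat 1 - B \<Longrightarrow> (x::real^'n) - B *v x = M *v (x - A *v x)"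
proof -
  assume fact: "M ** (mat 1 - A) = mat 1 - B"
  have "x - B *v x = (M ** (mat 1 - A)) *v x" unfolding fact
    by (rule matrix_vector_mult_mat_1_diff[symmetric])
  also have "\<dots> = M *v (x - A *v x)"
    by (simp add: matrix_vector_mul_assoc[symmetric] matrix_vector_mult_mat_1_diff)
  finally show ?thesis .
qed

lemma mat_matrix_vector_mult: "(mat c :: 'a::comm_ring_1^'n^'n) *v v = c *s v"
  by (simp add: vec_eq_iff matrix_vector_mult_def mat_def if_distrib if_distribR sum.delta cong:
      if_cong)

lemma matpow_commute: "R ** P = P ** R \<Longrightarrow> R ** matpow P k = matpow P k ** R"
proof (induction k)
  case (Suc k)
  have "R ** matpow P (Suc k) = (R ** P) ** matpow P k" by (simp add: matrix_mul_assoc)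
  also have "\<dots> = P ** (R ** matpow P k)" by (simp add: Suc.prems matrix_mul_assoc)
  also have "\<dots> = matpow P (Suc k) ** R" by (simp add: Suc matrix_mul_assoc)
  finally show ?case .
qed simp

lemma matpow_conj:
  assumes "X ** Y = mat 1" and "Y ** X = mat 1"
  shows "matpow (Y ** M ** X) k = Y ** matpow M k ** X"
proof (induction k)
  case (Suc k)
  have "matpow (Y ** M ** X) (Suc k) = Y ** M ** (X ** Y) ** matpow M k ** X"
    by (simp add: Suc matrix_mul_assoc)
  then show ?case by (simp add: assms(1) matrix_mul_assoc)
qed (simp add: assms(2))

lemma sum_matpow_mult_diff: "(\<Sum>j<k. matpow P j) ** (mat 1 - P) = mat 1 - matpow P k"
proof (induction k)
  case (Suc k)
  have "(\<Sum>j<Suc k. matpow P j) ** (mat 1 - P)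
      = (\<Sum>j<k. matpow P j) ** (mat 1 - P) + matpow P k ** (mat 1 - P)"
    by (simp add: matrix_add_rdistrib)
  also have "\<dots> = (mat 1 - matpow P k) + (matpow P k - matpow P k ** P)"
    by (subst Suc.IH) (simp only: matrix_diff_ldistrib matrix_mul_rid)
  finally show ?case by (simp add: matpow_commute[OF refl])
qed simp

lemma diff_mult_sum_matpow: "(mat 1 - P) ** (\<Sum>j<k. matpow P j) = mat 1 - matpow P k"
  by (induction k) (simp_all add: matrix_add_ldistrib matrix_diff_rdistrib)

lemma complexify_mult: "complexify ((A::real^'n^'n) ** B) = complexify A ** complexify B"
  by (simp add: complexify_def vec_eq_iff matrix_matrix_mult_def)

lemma complexify_mat_1: "complexify (mat 1 :: real^'n^'n) = mat 1"
  by (simp add: complexify_def vec_eq_iff mat_def)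

lemma eigenvalues_subset_similar:
  fixes A B T :: "real^'n^'n"
  assumes "B ** A = mat 1"
  shows "eigenvalues T \<subseteq> eigenvalues (A ** T ** B)"
proof
  fix c assume "c \<in> eigenvalues T"
  then obtain v where v: "v \<noteq> 0" "complexify T *v v = c *s v" unfolding eigenvalues_def by auto
  define w where "w = complexify A *v v"
  have Bw: "complexify B *v w = v"
    by (simp add: w_def matrix_vector_mul_assoc complexify_mult[symmetric] assms complexify_mat_1)
  then have "w \<noteq> 0" using v(1) by auto
  have "complexify (A ** T ** B) *v w = complexify A *v (complexify T *v (complexify B *v w))"
    by (simp add: complexify_mult matrix_vector_mul_assoc matrix_mul_assoc)
  also have "\<dots> = c *s w" unfolding Bw v(2) by (simp add: w_def vec.scale)
  finally show "c \<in> eigenvalues (A ** T ** B)" using \<open>w \<noteq> 0\<close> unfolding eigenvalues_def by auto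
qed

lemma spectral_radius_similar:
  fixes F T :: "real^'n^'n"
  assumes "invertible F"
  shows "spectral_radius (F ** T ** matrix_inv F) = spectral_radius T"
proof -
  have "eigenvalues T \<subseteq> eigenvalues (F ** T ** matrix_inv F)"
    by (rule eigenvalues_subset_similar) (rule matrix_inv_left[OF assms])
  moreover have "eigenvalues (F ** T ** matrix_inv F)
      \<subseteq> eigenvalues (matrix_inv F ** (F ** T ** matrix_inv F) ** F)"
    by (rule eigenvalues_subset_similar) (rule matrix_inv_right[OF assms])
  moreover have "matrix_inv F ** (F ** T ** matrix_inv F) ** F = T"
    by (metis matrix_mul_assoc matrix_mul_lid matrix_mul_rid matrix_inv_left[OF assms])
  ultimately show ?thesis unfolding spectral_radius_def by auto
qed

lemma real_eigenvector_imp_eigenvalue: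
  fixes M :: "real^'n^'n"
  assumes "x \<noteq> 0" "M *v x = l *\<^sub>R x"
  shows "complex_of_real l \<in> eigenvalues M"
proof -
  let ?v = "\<chi> i. complex_of_real (x $ i)"
  have "?v \<noteq> 0" using assms(1) by (auto simp: vec_eq_iff)
  moreover have "(\<Sum>j\<in>UNIV. M $ i $ j * x $ j) = l * x $ i" for i
    using assms(2) by (auto simp: vec_eq_iff matrix_vector_mult_def)
  then have "complexify M *v ?v = complex_of_real l *s ?v"
    by (simp add: vec_eq_iff matrix_vector_mult_def complexify_def flip: of_real_mult of_real_sum)
  ultimately show ?thesis unfolding eigenvalues_def by blast
qed

lemma eigenvalue_norm_le_entry_sum:
  fixes M :: "real^'n^'n"
  assumes "c \<in> eigenvalues M"
  shows "cmod c \<le> (\<Sum>i\<in>UNIV. \<Sum>j\<in>UNIV. \<bar>M $ i $ j\<bar>)"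
proof -
  obtain v where v: "v \<noteq> 0" "complexify M *v v = c *s v" using assms unfolding eigenvalues_def
    by auto
  have "\<exists>i0. \<forall>j. cmod (v $ j) \<le> cmod (v $ i0)"
  proof -
    have fin: "finite (range (\<lambda>i. cmod (v $ i)))" by simp
    then have "Max (range (\<lambda>i. cmod (v $ i))) \<in> range (\<lambda>i. cmod (v $ i))" by (intro Max_in) auto
    then obtain i0 where "Max (range (\<lambda>i. cmod (v $ i))) = cmod (v $ i0)" by (metis imageE)
    then show ?thesis using fin by (metis Max_ge rangeI)
  qed
  then obtain i0 where i0: "\<And>j. cmod (v $ j) \<le> cmod (v $ i0)" by blast
  have pos: "cmod (v $ i0) > 0"
  proof (rule ccontr)
    assume "\<not> ?thesis"
    then have "\<And>j. v $ j = 0" using i0 by (metis norm_ge_zero norm_le_zero_iff order.trans not_less)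
    then show False using v(1) by (simp add: vec_eq_iff)
  qed
  have "c * v $ i0 = (\<Sum>j\<in>UNIV. complex_of_real (M $ i0 $ j) * v $ j)"
    using v(2) by (auto simp: vec_eq_iff matrix_vector_mult_def complexify_def)
  then have "cmod c * cmod (v $ i0) = cmod (\<Sum>j\<in>UNIV. complex_of_real (M $ i0 $ j) * v $ j)"
    by (metis norm_mult)
  also have "\<dots> \<le> (\<Sum>j\<in>UNIV. \<bar>M $ i0 $ j\<bar> * cmod (v $ j))"
    by (rule order.trans[OF norm_sum]) (simp add: norm_mult)
  also have "\<dots> \<le> (\<Sum>j\<in>UNIV. \<bar>M $ i0 $ j\<bar> * cmod (v $ i0))"
    by (intro sum_mono mult_left_mono i0) auto
  also have "\<dots> = (\<Sum>j\<in>UNIV. \<bar>M $ i0 $ j\<bar>) * cmod (v $ i0)"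
    by (simp add: sum_distrib_right)
  finally have "cmod c \<le> (\<Sum>j\<in>UNIV. \<bar>M $ i0 $ j\<bar>)" using pos by simp
  also have "\<dots> \<le> (\<Sum>i\<in>UNIV. \<Sum>j\<in>UNIV. \<bar>M $ i $ j\<bar>)"
    by (rule member_le_sum[where f="\<lambda>i. \<Sum>j\<in>UNIV. \<bar>M $ i $ j\<bar>"]) (auto intro: sum_nonneg)
  finally show ?thesis .
qed

lemma det_minus_mat_poly:
  fixes M :: "complex^'n^'n"
  obtains p where "\<And>c. det (M - mat c) = poly p c"
proof
  let ?p = "\<Sum>q\<in>{q. q permutes (UNIV::'n set)}. [:of_int (sign q):] *
     (\<Prod>i\<in>UNIV. [: M $ i $ q i, - (if i = q i then 1 else 0) :])"
  have "(M - mat c) $ i $ j = poly [: M $ i $ j, - (if i = j then 1 else 0) :] c" for i j c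
    by (simp add: mat_def)
  then show "det (M - mat c) = poly ?p c" for c
    unfolding det_def by (simp add: poly_sum poly_prod)
qed

lemma eigenvalue_iff_det:
  fixes M :: "real^'n^'n"
  shows "c \<in> eigenvalues M \<longleftrightarrow> det (complexify M - mat c) = 0"
proof -
  have shift: "(complexify M - mat c) *v v = complexify M *v v - c *s v" for v
    by (simp add: matrix_vector_mult_diff_rdistrib mat_matrix_vector_mult)
  have "c \<in> eigenvalues M \<longleftrightarrow> (\<exists>v. v \<noteq> 0 \<and> (complexify M - mat c) *v v = 0)"
    unfolding eigenvalues_def shift by simp
  also have "\<dots> \<longleftrightarrow> \<not> inj ((*v) (complexify M - mat c))"
  proof
    assume "\<exists>v. v \<noteq> 0 \<and> (complexify M - mat c) *v v = 0"
    then show "\<not> inj ((*v) (complexify M - mat c))"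
      by (metis injD matrix_vector_mult_0_right)
  next
    assume "\<not> inj ((*v) (complexify M - mat c))"
    then obtain x y where "x \<noteq> y" "(complexify M - mat c) *v x = (complexify M - mat c) *v y"
      unfolding inj_def by blast
    then show "\<exists>v. v \<noteq> 0 \<and> (complexify M - mat c) *v v = 0"
      by (intro exI[of _ "x - y"]) (simp add: matrix_vector_mult_diff_distrib)
  qed
  finally show ?thesis
    using det_nz_iff_inj_gen[OF matrix_vector_mul_linear_gen] matrix_of_matrix_vector_mul by metis
qed

lemma finite_eigenvalues: "finite (eigenvalues (M::real^'n^'n))"
proof -
  obtain p where p: "\<And>c. det (complexify M - mat c) = poly p c" using det_minus_mat_poly by blast
  define c0 where "c0 = complex_of_real ((\<Sum>i\<in>UNIV. \<Sum>j\<in>UNIV. \<bar>M $ i $ j\<bar>) + 1)"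
  have "cmod c0 = (\<Sum>i\<in>UNIV. \<Sum>j\<in>UNIV. \<bar>M $ i $ j\<bar>) + 1"
    unfolding c0_def norm_of_real by (intro abs_of_nonneg add_nonneg_nonneg sum_nonneg) auto
  then have "c0 \<notin> eigenvalues M" using eigenvalue_norm_le_entry_sum by fastforce
  then have "p \<noteq> 0" using p eigenvalue_iff_det by fastforce
  moreover have "eigenvalues M \<subseteq> {c. poly p c = 0}" by (auto simp: eigenvalue_iff_det p)
  ultimately show ?thesis using poly_roots_finite finite_subset by blast
qed

lemma approximate_eigenpair_limit:
  fixes Y :: "real^'n^'n"
  assumes "xs \<longlonglongrightarrow> l" and "\<epsilon> \<longlonglongrightarrow> 0" and "\<mu> \<longlonglongrightarrow> L"
    and "\<And>k. Y *v xs k + \<epsilon> k *\<^sub>R e = \<mu> k *\<^sub>R xs k"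
  shows "Y *v l = L *\<^sub>R l"
proof (rule LIMSEQ_unique)
  have "(\<lambda>k. Y *v xs k) \<longlonglongrightarrow> Y *v l"
    by (rule bounded_linear.tendsto[OF matrix_vector_mul_bounded_linear assms(1)])
  then show "(\<lambda>k. Y *v xs k + \<epsilon> k *\<^sub>R e) \<longlonglongrightarrow> Y *v l"
    using tendsto_add[OF _ tendsto_scaleR[OF assms(2) tendsto_const]] by fastforce
  show "(\<lambda>k. Y *v xs k + \<epsilon> k *\<^sub>R e) \<longlonglongrightarrow> L *\<^sub>R l"
    unfolding assms(4) by (intro tendsto_intros assms(1,3))
qed

lemma matrix_vector_mult_rotated_real_part:
  fixes Y :: "real^'n^'n"
  assumes "complexify Y *v v = c *s v"
  shows "Y *v (\<chi> i. Re (cis \<phi> * v $ i)) = cmod c *\<^sub>R (\<chi> i. Re (cis (\<phi> + Arg c) * v $ i))"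
proof -
  have cv: "c * v $ i = (\<Sum>j\<in>UNIV. complex_of_real (Y $ i $ j) * v $ j)" for i
    using assms by (auto simp: vec_eq_iff matrix_vector_mult_def complexify_def)
  have "(\<Sum>j\<in>UNIV. Y $ i $ j * Re (cis \<phi> * v $ j)) = cmod c * Re (cis (\<phi> + Arg c) * v $ i)" for i
  proof -
    have "(\<Sum>j\<in>UNIV. Y $ i $ j * Re (cis \<phi> * v $ j))
        = Re (cis \<phi> * (\<Sum>j\<in>UNIV. complex_of_real (Y $ i $ j) * v $ j))"
      by (simp add: sum_distrib_left Re_sum mult.left_commute) (rule sum.cong; simp add:
          algebra_simps)
    also have "\<dots> = Re (complex_of_real (cmod c) * (cis \<phi> * cis (Arg c) * v $ i))"
      unfolding cv[symmetric]
        by (subst rcis_cmod_Arg[of c, symmetric]) (simp add: rcis_def ac_simps)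
    also have "\<dots> = cmod c * Re (cis (\<phi> + Arg c) * v $ i)"
      by (simp add: cis_mult)
    finally show ?thesis .
  qed
  then show ?thesis by (simp add: vec_eq_iff matrix_vector_mult_def)
qed

lemma eigenvalue_real_rotations:
  fixes Y :: "real^'n^'n"
  assumes "c \<in> eigenvalues Y"
  obtains w :: "real \<Rightarrow> real^'n" where
    "\<And>\<phi>. Y *v w \<phi> = cmod c *\<^sub>R w (\<phi> + Arg c)" and "\<And>\<phi>. w (\<phi> + pi) = - w \<phi>"
    and "bounded (range w)" and "range w \<noteq> {0}"
proof -
  obtain v where v: "v \<noteq> 0" "complexify Y *v v = c *s v" using assms unfolding eigenvalues_def
    by auto
  define w where "w \<phi> = (\<chi> i. Re (cis \<phi> * v $ i))" for \<phi>
  have "Y *v w \<phi> = cmod c *\<^sub>R w (\<phi> + Arg c)" for \<phi>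
    unfolding w_def by (rule matrix_vector_mult_rotated_real_part[OF v(2)])
  moreover have "w (\<phi> + pi) = - w \<phi>" for \<phi>
    by (simp add: w_def vec_eq_iff minus_cis[symmetric])
  moreover have "bounded (range w)"
  proof -
    have "norm (w \<phi>) \<le> (\<Sum>i\<in>UNIV. cmod (v $ i))" for \<phi>
    proof -
      have "norm (w \<phi>) \<le> (\<Sum>i\<in>UNIV. \<bar>w \<phi> $ i\<bar>)" by (rule norm_le_l1_cart)
      also have "\<dots> \<le> (\<Sum>i\<in>UNIV. cmod (v $ i))"
      proof (intro sum_mono)
        fix i
        have "\<bar>Re (cis \<phi> * v $ i)\<bar> \<le> cmod (cis \<phi> * v $ i)" by (rule abs_Re_le_cmod)
        then show "\<bar>w \<phi> $ i\<bar> \<le> cmod (v $ i)"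
          unfolding w_def by (simp only: vec_lambda_beta norm_mult norm_cis mult_1)
      qed
      finally show ?thesis .
    qed
    then show ?thesis unfolding bounded_iff by blast
  qed
  moreover have "range w \<noteq> {0}"
  proof
    assume "range w = {0}"
    then have "w 0 $ i = 0" "w (- (pi/2)) $ i = 0" for i by (metis rangeI singletonD zero_index)+
    moreover have "cis (- (pi/2)) = - \<i>" by (simp add: complex_eq_iff)
    ultimately have "v $ i = 0" for i by (simp add: w_def complex_eq_iff)
    then show False using v(1) by (simp add: vec_eq_iff)
  qed
  ultimately show ?thesis using that by blast
qed

section \<open>Matrices leaving a proper cone invariant\<close>

locale proper_cone_order =
  fixes K :: "(real^'n) set"
  assumes proper_cone: "proper_cone K"
begin

lemma K_closed: "closed K"
  using proper_cone unfolding proper_cone_def by auto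

lemma K_zero: "0 \<in> K"
  using proper_cone unfolding proper_cone_def by auto

lemma K_scaleR: "x \<in> K \<Longrightarrow> 0 \<le> c \<Longrightarrow> c *\<^sub>R x \<in> K"
  using proper_cone unfolding proper_cone_def cone_def by auto

lemma K_add: "x \<in> K \<Longrightarrow> y \<in> K \<Longrightarrow> x + y \<in> K"
  using proper_cone convex_cone[of K] unfolding proper_cone_def by blast

lemma K_sum: "(\<And>i. i \<in> S \<Longrightarrow> f i \<in> K) \<Longrightarrow> sum f S \<in> K"
  by (induction S rule: infinite_finite_induct) (auto simp: K_zero K_add)

lemma K_pointed:
  assumes "x \<in> K" and "- x \<in> K"
  shows "x = 0"
proof -
  have "x \<in> K \<inter> uminus ` K" using assms by (auto intro: image_eqI[of _ _ "- x"])
  then show ?thesis using proper_cone unfolding proper_cone_def by auto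
qed

lemma K_add_nonzero:
  assumes "x \<in> K" and "x \<noteq> 0" and "z \<in> K"
  shows "x + z \<noteq> 0"
proof
  assume "x + z = 0"
  then have "- x \<in> K" using assms(3) by (simp add: add_eq_0_iff)
  then show False using assms(1,2) K_pointed by blast
qed

lemma interior_K_nonempty: "\<exists>e. e \<in> interior K"
  using proper_cone unfolding proper_cone_def by auto

lemma interior_K_scaleR:
  assumes "z \<in> interior K" and "0 < c"
  shows "c *\<^sub>R z \<in> interior K"
proof -
  have "(*\<^sub>R) c ` interior K \<subseteq> K" using assms(2) interior_subset K_scaleR by fastforce
  moreover have "open ((*\<^sub>R) c ` interior K)" using assms(2) by (intro open_scaling) auto
  ultimately have "(*\<^sub>R) c ` interior K \<subseteq> interior K" by (rule interior_maximal)
  then show ?thesis using assms(1) by blast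
qed

lemma interior_K_add:
  assumes "y \<in> K" and "z \<in> interior K"
  shows "y + z \<in> interior K"
proof -
  have "(\<lambda>x. y + x) ` interior K \<subseteq> K" using assms(1) interior_subset K_add by fastforce
  moreover have "open ((\<lambda>x. y + x) ` interior K)" by (intro open_translation) auto
  ultimately have "(\<lambda>x. y + x) ` interior K \<subseteq> interior K" by (rule interior_maximal)
  then show ?thesis using assms(2) by blast
qed

lemma zero_notin_interior_K: "0 \<notin> interior K"
proof
  assume "0 \<in> interior K"
  then obtain r where r: "0 < r" "ball 0 r \<subseteq> K" using mem_interior by blast
  obtain x :: "real^'n" where x: "norm x = r / 2" using r(1) vector_choose_size[of "r / 2"] by auto
  then have "x \<in> ball 0 r" "- x \<in> ball 0 r" using r(1) by auto
  then have "x = 0" using r(2) K_pointed by blast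
  then show False using x r(1) by simp
qed

lemma K_nonneg_mult: "K_nonneg K A \<Longrightarrow> K_nonneg K B \<Longrightarrow> K_nonneg K (A ** B)"
  unfolding K_nonneg_def by (simp add: matrix_vector_mul_assoc[symmetric])

lemma K_nonneg_add: "K_nonneg K A \<Longrightarrow> K_nonneg K B \<Longrightarrow> K_nonneg K (A + B)"
  unfolding K_nonneg_def by (simp add: matrix_vector_mult_add_rdistrib K_add)

lemma K_nonneg_sum: "(\<And>i. i \<in> S \<Longrightarrow> K_nonneg K (f i)) \<Longrightarrow> K_nonneg K (sum f S)"
  unfolding K_nonneg_def by (simp add: matrix_vector_mult_sum_rdistrib K_sum)

lemma K_nonneg_matpow: "K_nonneg K M \<Longrightarrow> K_nonneg K (matpow M k)"
  by (induction k) (auto simp: K_nonneg_def simp flip: matrix_vector_mul_assoc)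

lemma K_ge_matpow:
  assumes "K_nonneg K P" and "K_ge K Pb P"
  shows "K_ge K (matpow Pb k) (matpow P k)"
  unfolding K_ge_def
proof (induction k)
  case (Suc k)
  have "K_nonneg K Pb" using K_nonneg_add[OF assms(2)[unfolded K_ge_def] assms(1)] by simp
  moreover have "matpow Pb (Suc k) - matpow P (Suc k)
      = Pb ** (matpow Pb k - matpow P k) + (Pb - P) ** matpow P k"
    by (simp add: matrix_diff_ldistrib matrix_diff_rdistrib)
  moreover have "K_nonneg K (matpow P k)" using assms(1) by (rule K_nonneg_matpow)
  ultimately show ?case
    using Suc assms(2) unfolding K_ge_def by (simp add: K_nonneg_add K_nonneg_mult)
qed (simp add: K_nonneg_def K_zero)

subsection \<open>A finite-dimensional Krein--Rutman theorem\<close>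

lemma zero_notin_convex_hull_K_sphere: "0 \<notin> convex hull (K \<inter> sphere 0 1)"
proof
  assume "0 \<in> convex hull (K \<inter> sphere 0 1)"
  then obtain S u where S: "finite S" "S \<subseteq> K \<inter> sphere 0 1" "\<forall>x\<in>S. 0 \<le> u x" "sum u S = 1"
    "(\<Sum>v\<in>S. u v *\<^sub>R v) = 0"
    unfolding convex_hull_explicit by blast
  obtain v0 where v0: "v0 \<in> S" "0 < u v0"
  proof (rule ccontr)
    assume "\<not> thesis"
    then have "\<forall>v\<in>S. u v \<le> 0" using that by force
    then have "sum u S \<le> 0" by (simp add: sum_nonpos)
    then show False using S(4) by simp
  qed
  have rest: "(\<Sum>v\<in>S - {v0}. u v *\<^sub>R v) \<in> K" using S by (intro K_sum K_scaleR) auto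
  have "u v0 *\<^sub>R v0 = - (\<Sum>v\<in>S - {v0}. u v *\<^sub>R v)"
    using S(5) sum.remove[OF S(1) v0(1), of "\<lambda>v. u v *\<^sub>R v"] by (simp add: eq_neg_iff_add_eq_0)
  then have "- (u v0 *\<^sub>R v0) \<in> K" using rest by simp
  moreover have "u v0 *\<^sub>R v0 \<in> K" using v0 S(2) by (intro K_scaleR) auto
  ultimately have "u v0 *\<^sub>R v0 = 0" using K_pointed by blast
  then show False using v0 S(2) by auto
qed

lemma K_functional_dominates_norm:
  obtains a b where "0 < b" and "\<And>x. x \<in> K \<Longrightarrow> b * norm x \<le> a \<bullet> x"
proof -
  let ?S = "K \<inter> sphere (0::real^'n) 1"
  have "compact (convex hull ?S)"
    by (intro compact_convex_hull closed_Int_compact K_closed compact_sphere)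
  moreover have "0 \<notin> convex hull ?S" by (rule zero_notin_convex_hull_K_sphere)
  ultimately obtain a b where ab: "0 < b" "\<forall>x\<in>convex hull ?S. b < a \<bullet> x"
    using separating_hyperplane_closed_0[OF convex_convex_hull compact_imp_closed] by blast
  have "b * norm x \<le> a \<bullet> x" if "x \<in> K" for x
  proof (cases "x = 0")
    case False
    then have "(1 / norm x) *\<^sub>R x \<in> convex hull ?S"
      using that by (intro hull_inc) (auto intro!: K_scaleR)
    then have "b < a \<bullet> ((1 / norm x) *\<^sub>R x)" using ab(2) by blast
    then have "b < (a \<bullet> x) / norm x" by (simp add: inner_scaleR_right)
    then show ?thesis using False by (simp add: field_simps)
  qed simp
  then show ?thesis using that ab(1) by blast
qed

lemma dominating_functional_pos:
  assumes "0 < b" and "\<And>x. x \<in> K \<Longrightarrow> b * norm x \<le> a \<bullet> x" and "v \<in> interior K"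
  shows "0 < a \<bullet> v"
proof -
  have "v \<noteq> 0" using assms(3) zero_notin_interior_K by metis
  then have "0 < b * norm v" using assms(1) by simp
  also have "\<dots> \<le> a \<bullet> v" using assms(2,3) interior_subset by blast
  finally show ?thesis .
qed

lemma compact_K_section:
  assumes "0 < b" and "\<And>x. x \<in> K \<Longrightarrow> b * norm x \<le> a \<bullet> x"
  shows "compact (K \<inter> {x. a \<bullet> x = 1})"
proof -
  have "K \<inter> {x. a \<bullet> x = 1} \<subseteq> cball 0 (1 / b)"
  proof
    fix x assume "x \<in> K \<inter> {x. a \<bullet> x = 1}"
    then have "b * norm x \<le> 1" using assms(2)[of x] by simp
    then show "x \<in> cball 0 (1 / b)" using assms(1) by (simp add: field_simps)
  qed
  then have "bounded (K \<inter> {x. a \<bullet> x = 1})" by (rule bounded_subset[OF bounded_cball])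
  moreover have "closed (K \<inter> {x. a \<bullet> x = 1})" by (intro closed_Int K_closed closed_hyperplane)
  ultimately show ?thesis by (simp add: compact_eq_bounded_closed)
qed

lemma least_interior_multiple:
  assumes x: "x \<in> interior K" and W: "bounded W"
  obtains \<alpha> where "0 \<le> \<alpha>" and "\<And>w. w \<in> W \<Longrightarrow> \<alpha> *\<^sub>R x - w \<in> K"
    and "\<And>\<beta>. 0 \<le> \<beta> \<Longrightarrow> (\<And>w. w \<in> W \<Longrightarrow> \<beta> *\<^sub>R x - w \<in> K) \<Longrightarrow> \<alpha> \<le> \<beta>"
proof -
  define S where "S = {\<alpha>. 0 \<le> \<alpha> \<and> (\<forall>w\<in>W. \<alpha> *\<^sub>R x - w \<in> K)}"
  obtain r where r: "0 < r" "ball x r \<subseteq> K" using x mem_interior by blast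
  obtain B where B: "0 < B" "\<And>w. w \<in> W \<Longrightarrow> norm w \<le> B" using W bounded_pos by blast
  define \<alpha>1 where "\<alpha>1 = 2 * B / r"
  have \<alpha>1: "0 < \<alpha>1" "B / \<alpha>1 = r / 2" unfolding \<alpha>1_def using B(1) r(1) by auto
  have "\<alpha>1 *\<^sub>R x - w \<in> K" if "w \<in> W" for w
  proof -
    have "norm ((1 / \<alpha>1) *\<^sub>R w) = norm w / \<alpha>1" using \<alpha>1(1) by simp
    also have "\<dots> \<le> B / \<alpha>1" using \<alpha>1(1) by (intro divide_right_mono B(2)[OF that]) simp
    also have "\<dots> < r" using \<alpha>1(2) r(1) by simp
    finally have "x - (1 / \<alpha>1) *\<^sub>R w \<in> ball x r" by (simp add: dist_norm)
    then have "x - (1 / \<alpha>1) *\<^sub>R w \<in> K" using r(2) by blast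
    then have "\<alpha>1 *\<^sub>R (x - (1 / \<alpha>1) *\<^sub>R w) \<in> K" using \<alpha>1(1) by (intro K_scaleR) auto
    then show ?thesis using \<alpha>1(1) by (simp add: scaleR_diff_right)
  qed
  then have "\<alpha>1 \<in> S" unfolding S_def using \<alpha>1(1) by auto
  moreover have "closed S"
  proof -
    have "S = {\<alpha>. 0 \<le> \<alpha>} \<inter> (\<Inter>w\<in>W. (\<lambda>\<alpha>. \<alpha> *\<^sub>R x - w) -` K)" unfolding S_def by auto
    moreover have "closed ((\<lambda>\<alpha>. \<alpha> *\<^sub>R x - w) -` K)" for w
      by (intro continuous_closed_vimage K_closed continuous_intros)
    ultimately show ?thesis by (auto intro!: closed_Int closed_INT simp: closed_Collect_le)
  qed
  moreover have "bdd_below S" unfolding S_def by (auto intro: bdd_belowI[of _ 0])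
  ultimately have "Inf S \<in> S" by (intro closed_contains_Inf) auto
  moreover have "Inf S \<le> \<beta>" if "\<beta> \<in> S" for \<beta> using that \<open>bdd_below S\<close> by (rule cInf_lower)
  ultimately show ?thesis using that unfolding S_def by auto
qed

lemma supersolution_coeff_nonneg:
  assumes Y: "K_nonneg K Y" and x: "x \<in> K" "x \<noteq> 0" and lx: "l *\<^sub>R x - Y *v x \<in> K"
  shows "0 \<le> l"
proof (rule ccontr)
  assume l: "\<not> 0 \<le> l"
  have "(l *\<^sub>R x - Y *v x) + Y *v x \<in> K" using lx x(1) Y unfolding K_nonneg_def by (intro K_add) auto
  then have "l *\<^sub>R x \<in> K" by simp
  then have "(- 1 / l) *\<^sub>R (l *\<^sub>R x) \<in> K" by (rule K_scaleR) (use l in simp)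
  then have "- x \<in> K" using l by simp
  then show False using x K_pointed by blast
qed

lemma rotation_bound_rescale:
  fixes w :: "real \<Rightarrow> real^'n" and \<theta> :: real
  assumes Y: "K_nonneg K Y" and lx: "l *\<^sub>R x - Y *v x \<in> K"
    and w: "\<And>\<phi>. Y *v w \<phi> = r *\<^sub>R w (\<phi> + \<theta>)" and r: "0 < r"
    and \<alpha>: "0 \<le> \<alpha>" "\<And>\<phi>. \<alpha> *\<^sub>R x - w \<phi> \<in> K"
  shows "(\<alpha> * l / r) *\<^sub>R x - w \<psi> \<in> K"
proof -
  have "Y *v (\<alpha> *\<^sub>R x - w (\<psi> - \<theta>)) \<in> K" using \<alpha>(2) Y unfolding K_nonneg_def by simp
  moreover have "Y *v (\<alpha> *\<^sub>R x - w (\<psi> - \<theta>)) = \<alpha> *\<^sub>R (Y *v x) - r *\<^sub>R w \<psi>"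
    using w[of "\<psi> - \<theta>"] by (simp add: matrix_vector_mult_diff_distrib matrix_vector_mult_scaleR)
  moreover have "\<alpha> *\<^sub>R (l *\<^sub>R x - Y *v x) \<in> K" using lx \<alpha>(1) by (rule K_scaleR)
  ultimately have "(\<alpha> *\<^sub>R (Y *v x) - r *\<^sub>R w \<psi>) + \<alpha> *\<^sub>R (l *\<^sub>R x - Y *v x) \<in> K"
    using K_add by simp
  then have "(1 / r) *\<^sub>R ((\<alpha> * l) *\<^sub>R x - r *\<^sub>R w \<psi>) \<in> K"
    using r by (intro K_scaleR) (auto simp: algebra_simps)
  then show ?thesis using r by (simp add: scaleR_diff_right)
qed

lemma eigenvalue_norm_le_of_interior_supersolution:
  assumes Y: "K_nonneg K Y" and x: "x \<in> interior K"
    and lx: "l *\<^sub>R x - Y *v x \<in> K" and c: "c \<in> eigenvalues Y"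
  shows "cmod c \<le> l"
proof (rule ccontr)
  have l: "0 \<le> l"
    using supersolution_coeff_nonneg[OF Y _ _ lx] x interior_subset zero_notin_interior_K by blast
  assume "\<not> ?thesis"
  then have cl: "l < cmod c" and cpos: "0 < cmod c" using l by auto
  \<comment> \<open>The least \<open>\<alpha>\<close> with \<open>\<alpha> x - w \<phi> \<in> K\<close> for all \<open>\<phi>\<close> is positive,
    yet \<open>\<alpha> l / |c| < \<alpha>\<close> would also do.\<close>
  obtain w where w: "\<And>\<phi>. Y *v w \<phi> = cmod c *\<^sub>R w (\<phi> + Arg c)" "\<And>\<phi>. w (\<phi> + pi) = - w \<phi>"
    "bounded (range w)" "range w \<noteq> {0}"
    using eigenvalue_real_rotations[OF c] by blast
  obtain \<alpha> where \<alpha>: "0 \<le> \<alpha>" "\<And>u. u \<in> range w \<Longrightarrow> \<alpha> *\<^sub>R x - u \<in> K"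
    and least: "\<And>\<beta>. 0 \<le> \<beta> \<Longrightarrow> (\<And>u. u \<in> range w \<Longrightarrow> \<beta> *\<^sub>R x - u \<in> K) \<Longrightarrow> \<alpha> \<le> \<beta>"
    by (rule least_interior_multiple[OF x w(3)], rule that) blast+
  have \<alpha>w: "\<alpha> *\<^sub>R x - w \<phi> \<in> K" for \<phi> using \<alpha>(2) by blast
  have "0 < \<alpha>"
  proof (rule ccontr)
    assume "\<not> 0 < \<alpha>"
    then have "\<alpha> = 0" using \<alpha>(1) by simp
    then have neg: "- w \<phi> \<in> K" for \<phi> using \<alpha>w[of \<phi>] by simp
    have "w \<phi> = 0" for \<phi>
    proof -
      have "w \<phi> \<in> K" using neg[of "\<phi> + pi"] unfolding w(2) by simp
      then show ?thesis using neg[of \<phi>] by (rule K_pointed)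
    qed
    then show False using w(4) by auto
  qed
  have "\<alpha> \<le> \<alpha> * l / cmod c"
  proof (rule least)
    show "0 \<le> \<alpha> * l / cmod c" using \<alpha>(1) l by simp
    show "(\<alpha> * l / cmod c) *\<^sub>R x - u \<in> K" if "u \<in> range w" for u
      using that rotation_bound_rescale[where w = w and \<theta> = "Arg c" and r = "cmod c",
          OF Y lx w(1) cpos \<alpha>(1) \<alpha>w] by blast
  qed
  moreover have "\<alpha> * l / cmod c < \<alpha>"
    using mult_strict_left_mono[OF cl \<open>0 < \<alpha>\<close>] cpos by (simp add: divide_less_eq)
  ultimately show False by simp
qed

lemma perturbed_eigenvector:
  assumes Y: "K_nonneg K Y" and ab: "0 < b" "\<And>x. x \<in> K \<Longrightarrow> b * norm x \<le> a \<bullet> x"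
    and e: "e \<in> interior K" and \<epsilon>: "0 < \<epsilon>"
  obtains x where "x \<in> interior K" and "a \<bullet> x = 1"
    and "Y *v x + \<epsilon> *\<^sub>R e = (a \<bullet> (Y *v x) + \<epsilon> * (a \<bullet> e)) *\<^sub>R x"
proof -
  define B where "B = K \<inter> {x. a \<bullet> x = 1}"
  define g where "g x = Y *v x + \<epsilon> *\<^sub>R e" for x
  have g_int: "g x \<in> interior K" if "x \<in> K" for x
    using that Y e \<epsilon> unfolding g_def K_nonneg_def by (intro interior_K_add interior_K_scaleR) auto
  have g_pos: "0 < a \<bullet> g x" if "x \<in> K" for x
    using dominating_functional_pos[OF ab g_int[OF that]] .
  define f where "f x = (1 / (a \<bullet> g x)) *\<^sub>R g x" for x
  have "compact B" unfolding B_def by (rule compact_K_section[OF ab])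
  moreover have "convex B"
    using proper_cone unfolding B_def proper_cone_def by (intro convex_Int convex_hyperplane) auto
  moreover have "(1 / (a \<bullet> e)) *\<^sub>R e \<in> B"
    using dominating_functional_pos[OF ab e] e interior_subset unfolding B_def
      by (auto intro!: K_scaleR)
  then have "B \<noteq> {}" by blast
  moreover have "continuous_on B f"
    unfolding f_def g_def using g_pos unfolding B_def g_def
    by (intro continuous_intros matrix_vector_mult_linear_continuous_on) (auto simp: less_le)
  moreover have "f x \<in> B" if "x \<in> B" for x
  proof -
    have "0 < a \<bullet> g x" "g x \<in> K" using that g_pos g_int interior_subset unfolding B_def by auto
    then show ?thesis unfolding B_def f_def by (auto intro!: K_scaleR)
  qed
  then have "f \<in> B \<rightarrow> B" by blast
  ultimately obtain x where x: "x \<in> B" "f x = x" by (rule brouwer)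
  define \<mu> where "\<mu> = a \<bullet> g x"
  have xK: "x \<in> K" and ax: "a \<bullet> x = 1" using x(1) unfolding B_def by auto
  have \<mu>: "0 < \<mu>" unfolding \<mu>_def using g_pos[OF xK] .
  have "g x = \<mu> *\<^sub>R ((1 / \<mu>) *\<^sub>R g x)" using \<mu> by simp
  also have "\<dots> = \<mu> *\<^sub>R x" using x(2) unfolding f_def \<mu>_def by simp
  finally have eq: "g x = \<mu> *\<^sub>R x" .
  have "(1 / \<mu>) *\<^sub>R g x \<in> interior K" using g_int[OF xK] \<mu> by (intro interior_K_scaleR) auto
  then have "x \<in> interior K" using eq \<mu> by simp
  moreover note ax
  moreover have "Y *v x + \<epsilon> *\<^sub>R e = (a \<bullet> (Y *v x) + \<epsilon> * (a \<bullet> e)) *\<^sub>R x"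
    using eq unfolding \<mu>_def g_def by (simp add: inner_add_right)
  ultimately show ?thesis by (rule that)
qed

lemma perturbed_eigenvectors:
  assumes Y: "K_nonneg K Y" and ab: "0 < b" "\<And>x. x \<in> K \<Longrightarrow> b * norm x \<le> a \<bullet> x"
    and e: "e \<in> interior K" and \<epsilon>: "\<And>k. 0 < \<epsilon> k"
  obtains xs where "\<forall>k. xs k \<in> interior K \<and> a \<bullet> xs k = 1
      \<and> Y *v xs k + \<epsilon> k *\<^sub>R e = (a \<bullet> (Y *v xs k) + \<epsilon> k * (a \<bullet> e)) *\<^sub>R xs k"
proof -
  have "\<forall>k. \<exists>x. x \<in> interior K \<and> a \<bullet> x = 1
      \<and> Y *v x + \<epsilon> k *\<^sub>R e = (a \<bullet> (Y *v x) + \<epsilon> k * (a \<bullet> e)) *\<^sub>R x"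
  proof
    fix k
    show "\<exists>x. x \<in> interior K \<and> a \<bullet> x = 1
      \<and> Y *v x + \<epsilon> k *\<^sub>R e = (a \<bullet> (Y *v x) + \<epsilon> k * (a \<bullet> e)) *\<^sub>R x"
      by (rule perturbed_eigenvector[OF Y ab e \<epsilon>[of k]]) auto
  qed
  then show ?thesis using that unfolding choice_iff by blast
qed

lemma K_nonneg_eigenvector_limit:
  assumes Y: "K_nonneg K Y"
  obtains z L where "z \<in> K" and "z \<noteq> 0" and "Y *v z = L *\<^sub>R z"
    and "\<And>t. L < t \<Longrightarrow> \<exists>x t'. x \<in> interior K \<and> t' < t \<and> t' *\<^sub>R x - Y *v x \<in> K"
proof -
  obtain a b where ab: "0 < b" "\<And>x. x \<in> K \<Longrightarrow> b * norm x \<le> a \<bullet> x"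
    using K_functional_dominates_norm by blast
  obtain e where e: "e \<in> interior K" using interior_K_nonempty by blast
  define \<epsilon> where "\<epsilon> k = inverse (real (Suc k))" for k
  have \<epsilon>_pos: "0 < \<epsilon> k" for k unfolding \<epsilon>_def by simp
  obtain xs where xs_all: "\<forall>k. xs k \<in> interior K \<and> a \<bullet> xs k = 1
      \<and> Y *v xs k + \<epsilon> k *\<^sub>R e = (a \<bullet> (Y *v xs k) + \<epsilon> k * (a \<bullet> e)) *\<^sub>R xs k"
    by (rule perturbed_eigenvectors[OF Y ab e \<epsilon>_pos])
  define \<mu> where "\<mu> k = a \<bullet> (Y *v xs k) + \<epsilon> k * (a \<bullet> e)" for k
  have xs: "xs k \<in> interior K" "a \<bullet> xs k = 1" and eig: "Y *v xs k + \<epsilon> k *\<^sub>R e = \<mu> k *\<^sub>R xs k" for k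
    using xs_all unfolding \<mu>_def by auto
  have "\<forall>k. xs k \<in> K \<inter> {x. a \<bullet> x = 1}" using xs interior_subset by blast
  with compact_imp_seq_compact[OF compact_K_section[OF ab]]
  obtain l r where l: "l \<in> K \<inter> {x. a \<bullet> x = 1}" and r: "strict_mono r" "(xs \<circ> r) \<longlonglongrightarrow> l"
    by (rule seq_compactE)
  have x_lim: "(\<lambda>k. xs (r k)) \<longlonglongrightarrow> l" using r(2) by (simp add: o_def)
  have \<epsilon>_lim: "(\<lambda>k. \<epsilon> (r k)) \<longlonglongrightarrow> 0"
    using LIMSEQ_subseq_LIMSEQ[OF LIMSEQ_inverse_real_of_nat r(1)] unfolding \<epsilon>_def
      by (simp add: o_def)
  define L where "L = a \<bullet> (Y *v l)"
  have "(\<lambda>k. Y *v xs (r k)) \<longlonglongrightarrow> Y *v l"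
    by (rule bounded_linear.tendsto[OF matrix_vector_mul_bounded_linear x_lim])
  then have "(\<lambda>k. a \<bullet> (Y *v xs (r k)) + \<epsilon> (r k) * (a \<bullet> e)) \<longlonglongrightarrow> a \<bullet> (Y *v l) + 0 * (a \<bullet> e)"
    by (intro tendsto_intros \<epsilon>_lim)
  then have \<mu>_lim: "(\<lambda>k. \<mu> (r k)) \<longlonglongrightarrow> L" by (simp add: \<mu>_def L_def)
  have "l \<in> K" "l \<noteq> 0" using l by auto
  moreover have "Y *v l = L *\<^sub>R l" using eig
    by (rule approximate_eigenpair_limit[OF x_lim \<epsilon>_lim \<mu>_lim])
  moreover have "\<exists>x t'. x \<in> interior K \<and> t' < t \<and> t' *\<^sub>R x - Y *v x \<in> K" if Lt: "L < t" for t
  proof -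
    have "\<forall>\<^sub>F k in sequentially. \<mu> (r k) < t" by (rule order_tendstoD(2)[OF \<mu>_lim Lt])
    then obtain N where "\<forall>k\<ge>N. \<mu> (r k) < t" unfolding eventually_sequentially by blast
    moreover have "\<mu> (r N) *\<^sub>R xs (r N) - Y *v xs (r N) = \<epsilon> (r N) *\<^sub>R e"
      by (simp add: eig[symmetric])
    with e interior_subset have "\<mu> (r N) *\<^sub>R xs (r N) - Y *v xs (r N) \<in> K"
      by (auto simp: \<epsilon>_def intro!: K_scaleR)
    ultimately show ?thesis using xs(1)[of "r N"] by auto
  qed
  ultimately show ?thesis by (rule that)
qed

lemma krein_rutman:
  assumes Y: "K_nonneg K Y"
  shows "\<exists>z\<in>K. z \<noteq> 0 \<and> Y *v z = spectral_radius Y *\<^sub>R z"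
    and "spectral_radius Y < t \<Longrightarrow> \<exists>x t'. x \<in> interior K \<and> t' < t \<and> t' *\<^sub>R x - Y *v x \<in> K"
proof -
  obtain z L where z: "z \<in> K" "z \<noteq> 0" "Y *v z = L *\<^sub>R z"
    and super: "\<And>t. L < t \<Longrightarrow> \<exists>x t'. x \<in> interior K \<and> t' < t \<and> t' *\<^sub>R x - Y *v x \<in> K"
    by (rule K_nonneg_eigenvector_limit[OF Y], rule that) blast+
  have L: "0 \<le> L" using supersolution_coeff_nonneg[OF Y z(1,2)] z(3) K_zero by simp
  have "spectral_radius Y = L"
    unfolding spectral_radius_def
  proof (rule Max_eqI)
    show "finite (cmod ` eigenvalues Y)" using finite_eigenvalues by blast
    show "L \<in> cmod ` eigenvalues Y"
      using real_eigenvector_imp_eigenvalue[OF z(2,3)] L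
        by (metis abs_of_nonneg image_eqI norm_of_real)
  next
    fix r assume "r \<in> cmod ` eigenvalues Y"
    then obtain c where c: "c \<in> eigenvalues Y" "r = cmod c" by blast
    show "r \<le> L"
    proof (rule dense_ge)
      fix t assume "L < t"
      then obtain x t' where "x \<in> interior K" "t' < t" "t' *\<^sub>R x - Y *v x \<in> K"
        using super by blast
      then have "cmod c \<le> t'" using eigenvalue_norm_le_of_interior_supersolution[OF Y _ _ c(1)]
        by blast
      then show "r \<le> t" using \<open>t' < t\<close> c(2) by simp
    qed
  qed
  then show "\<exists>z\<in>K. z \<noteq> 0 \<and> Y *v z = spectral_radius Y *\<^sub>R z"
    and "spectral_radius Y < t \<Longrightarrow> \<exists>x t'. x \<in> interior K \<and> t' < t \<and> t' *\<^sub>R x - Y *v x \<in> K"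
    using z super by auto
qed

lemma supersolution_shift_rescale:
  assumes Y: "K_nonneg K Y" and t: "0 < t" and z: "t' *\<^sub>R z - Y *v z \<in> K"
    and d: "t *\<^sub>R d - Y *v d \<in> K" and \<beta>: "0 \<le> \<beta>" "d + \<beta> *\<^sub>R z \<in> K"
  shows "d + (\<beta> * t' / t) *\<^sub>R z \<in> K"
proof -
  have "Y *v (d + \<beta> *\<^sub>R z) + (t *\<^sub>R d - Y *v d) + \<beta> *\<^sub>R (t' *\<^sub>R z - Y *v z) \<in> K"
    using Y \<beta> d z unfolding K_nonneg_def by (intro K_add K_scaleR) auto
  then have "(1 / t) *\<^sub>R (Y *v (d + \<beta> *\<^sub>R z) + (t *\<^sub>R d - Y *v d) + \<beta> *\<^sub>R (t' *\<^sub>R z - Y *v z)) \<in> K"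
    using t by (intro K_scaleR) auto
  moreover have "(1 / t) *\<^sub>R (Y *v (d + \<beta> *\<^sub>R z) + (t *\<^sub>R d - Y *v d) + \<beta> *\<^sub>R (t' *\<^sub>R z - Y *v z))
      = d + (\<beta> * t' / t) *\<^sub>R z"
    using t by (simp add: matrix_vector_right_distrib matrix_vector_mult_scaleR algebra_simps)
  ultimately show ?thesis by simp
qed

lemma resolvent_K_nonneg:
  assumes Y: "K_nonneg K Y" and t: "spectral_radius Y < t" and d: "t *\<^sub>R d - Y *v d \<in> K"
  shows "d \<in> K"
proof -
  obtain z t' where z: "z \<in> interior K" "t' < t" "t' *\<^sub>R z - Y *v z \<in> K"
    using krein_rutman(2)[OF Y t] by blast
  have t': "0 \<le> t'"
    using supersolution_coeff_nonneg[OF Y _ _ z(3)] z(1) interior_subset zero_notin_interior_K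
      by blast
  have tpos: "0 < t" using t' z(2) by linarith
  \<comment> \<open>The least \<open>\<beta>\<close> with \<open>d + \<beta> z \<in> K\<close> is \<open>0\<close>, since otherwise
    \<open>\<beta> t' / t < \<beta>\<close> would also do.\<close>
  show ?thesis
  proof (rule least_interior_multiple[OF z(1), of "{- d}"])
    fix \<beta> assume \<beta>: "0 \<le> \<beta>" "\<And>w. w \<in> {- d} \<Longrightarrow> \<beta> *\<^sub>R z - w \<in> K"
      and least: "\<And>\<gamma>. 0 \<le> \<gamma> \<Longrightarrow> (\<And>w. w \<in> {- d} \<Longrightarrow> \<gamma> *\<^sub>R z - w \<in> K) \<Longrightarrow> \<beta> \<le> \<gamma>"
    have dz: "d + \<beta> *\<^sub>R z \<in> K" using \<beta>(2)[of "- d"] by (simp add: add.commute)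
    show "d \<in> K"
    proof (cases "\<beta> = 0")
      case True
      then show ?thesis using dz by simp
    next
      case False
      have "\<beta> \<le> \<beta> * t' / t"
        using supersolution_shift_rescale[OF Y tpos z(3) d \<beta>(1) dz] \<beta>(1) t' tpos
        by (intro least) (auto simp: add.commute)
      moreover have "\<beta> * t' / t < \<beta>"
        using \<beta>(1) False z(2) tpos by (simp add: divide_less_eq mult_strict_left_mono)
      ultimately show ?thesis by simp
    qed
  qed (simp add: bounded_insert)
qed

lemma spectral_radius_ge_of_subeigenvector:
  assumes Y: "K_nonneg K Y" and x: "x \<in> K" "x \<noteq> 0" and \<mu>: "Y *v x - \<mu> *\<^sub>R x \<in> K"
  shows "\<mu> \<le> spectral_radius Y"
proof (rule ccontr)
  assume "\<not> ?thesis"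
  moreover have "\<mu> *\<^sub>R (- x) - Y *v (- x) \<in> K" using \<mu> by (simp add: matrix_vector_mult_neg)
  ultimately have "- x \<in> K" using resolvent_K_nonneg[OF Y] by force
  then show False using x K_pointed by blast
qed

lemma resolvent_surj:
  assumes Y: "K_nonneg K Y" and t: "spectral_radius Y < t"
  obtains w where "t *\<^sub>R w - Y *v w = m"
proof -
  define f where "f w = (t *\<^sub>R mat 1 - Y) *v w" for w
  have f_eq: "f w = t *\<^sub>R w - Y *v w" for w
    unfolding f_def by (simp add: matrix_vector_mult_diff_rdistrib
        scaleR_matrix_vector_assoc[symmetric])
  have lin: "linear f" unfolding f_def by (rule matrix_vector_mul_linear)
  have "u = 0" if "f u = 0" for u
  proof -
    have "t *\<^sub>R u - Y *v u \<in> K" "t *\<^sub>R (- u) - Y *v (- u) \<in> K"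
      using that K_zero unfolding f_eq by (simp_all add: matrix_vector_mult_neg)
    then show ?thesis using resolvent_K_nonneg[OF Y t] K_pointed by blast
  qed
  then have "inj f" using lin by (simp add: linear_inj_iff_eq_0)
  then have "surj f" using lin by (simp add: linear_injective_imp_surjective)
  then show ?thesis using that f_eq by (metis surjD)
qed

lemma resolvent_diff_K_nonneg:
  assumes "K_nonneg K Db" and "K_ge K Db D" and "spectral_radius Db < t" and "u \<in> K"
    and "t *\<^sub>R w - Db *v w = t *\<^sub>R u - D *v u"
  shows "w - u \<in> K"
proof (rule resolvent_K_nonneg[OF assms(1,3)])
  have "t *\<^sub>R (w - u) - Db *v (w - u) = (Db - D) *v u"
    using assms(5) by (simp add: matrix_vector_mult_diff_distrib matrix_vector_mult_diff_rdistrib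
        algebra_simps)
  then show "t *\<^sub>R (w - u) - Db *v (w - u) \<in> K" using assms(2,4) unfolding K_ge_def K_nonneg_def
    by simp
qed

subsection \<open>Comparing spectral radii through factorizations\<close>

lemma spectral_radius_lt_1_of_factorization:
  assumes Q: "K_nonneg K Q" and D: "K_nonneg K D" "spectral_radius D < 1" and Y: "K_nonneg K Y"
    and fact: "Y ** (mat 1 - Q) = mat 1 - D"
  shows "spectral_radius Q < 1"
proof (rule ccontr)
  assume "\<not> ?thesis"
  then have \<rho>: "1 \<le> spectral_radius Q" by simp
  obtain x where x: "x \<in> K" "x \<noteq> 0" "Q *v x = spectral_radius Q *\<^sub>R x"
    using krein_rutman(1)[OF Q] by blast
  have "x - D *v x = Y *v (x - Q *v x)" using fact by (rule factor_mat_1_diff_apply)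
  then have "D *v x - 1 *\<^sub>R x = (spectral_radius Q - 1) *\<^sub>R (Y *v x)"
    using x(3) by (simp add: matrix_vector_mult_diff_distrib matrix_vector_mult_scaleR
        algebra_simps)
  moreover have "(spectral_radius Q - 1) *\<^sub>R (Y *v x) \<in> K"
    using \<rho> Y x(1) unfolding K_nonneg_def by (intro K_scaleR) auto
  ultimately have "1 \<le> spectral_radius D" using spectral_radius_ge_of_subeigenvector[OF D(1) x(1,2)]
    by simp
  then show False using D(2) by simp
qed

lemma spectral_radius_le_of_factorization:
  assumes Q: "K_nonneg K Q" "spectral_radius Q < 1" and Qb: "K_nonneg K Qb"
    and Db: "K_nonneg K Db" "K_ge K Db D" "spectral_radius Db < 1"
    and XY: "X ** Y = mat 1" "Y ** X = mat 1" and Y: "K_nonneg K Y"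
    and fact: "mat 1 - Q = X ** (mat 1 - D)" and factb: "mat 1 - Qb = X ** (mat 1 - Db)"
  shows "spectral_radius Q \<le> spectral_radius Qb"
proof (rule ccontr)
  define l where "l = spectral_radius Q"
  assume "\<not> ?thesis"
  then have lt: "spectral_radius Qb < l" and l1: "0 < 1 - l" using Q(2) unfolding l_def by auto
  obtain x where x: "x \<in> K" "x \<noteq> 0" "Q *v x = l *\<^sub>R x" using krein_rutman(1)[OF Q(1)] unfolding l_def
    by blast
  \<comment> \<open>Solving \<open>w - Db w = Y x\<close> gives \<open>w \<ge>\<^sub>K x / (1 - l) \<ge>\<^sub>K 0\<close>
    and \<open>Qb (- w) \<le>\<^sub>K l (- w)\<close>, hence \<open>w = 0\<close>.\<close>
  define u where "u = (1 / (1 - l)) *\<^sub>R x"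
  have uK: "u \<in> K" unfolding u_def using x(1) l1 by (intro K_scaleR) auto
  have "Y ** (mat 1 - Q) = mat 1 - D" unfolding fact by (simp add: matrix_mul_assoc XY(2))
  then have "x - D *v x = Y *v (x - Q *v x)" by (rule factor_mat_1_diff_apply)
  then have "u - D *v u = (1 / (1 - l)) *\<^sub>R (Y *v (x - Q *v x))"
    unfolding u_def by (simp add: matrix_vector_mult_scaleR flip: scaleR_diff_right)
  also have "x - Q *v x = (1 - l) *\<^sub>R x" using x(3) by (simp add: algebra_simps)
  also have "(1 / (1 - l)) *\<^sub>R (Y *v ((1 - l) *\<^sub>R x)) = Y *v x" using l1
    by (simp add: matrix_vector_mult_scaleR)
  finally have Du: "1 *\<^sub>R u - D *v u = Y *v x" by simp
  obtain w where w: "1 *\<^sub>R w - Db *v w = Y *v x" using resolvent_surj[OF Db(1,3)] by blast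
  have wu: "w - u \<in> K" using resolvent_diff_K_nonneg[OF Db uK] w Du by simp
  have "x = X *v (Y *v x)" by (simp add: matrix_vector_mul_assoc XY(1))
  also have "\<dots> = w - Qb *v w" using factor_mat_1_diff_apply[OF factb[symmetric], of w] w by simp
  finally have Qbw: "Qb *v w = w - x" by (simp add: algebra_simps)
  have xu: "x = (1 - l) *\<^sub>R u" unfolding u_def using l1 by simp
  have "l *\<^sub>R (- w) - Qb *v (- w) = (1 - l) *\<^sub>R (w - u)"
    unfolding matrix_vector_mult_neg Qbw xu by (simp add: algebra_simps)
  moreover have "(1 - l) *\<^sub>R (w - u) \<in> K" using wu l1 by (intro K_scaleR) auto
  ultimately have "l *\<^sub>R (- w) - Qb *v (- w) \<in> K" by simp
  then have "- w \<in> K" by (rule resolvent_K_nonneg[OF Qb lt])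
  moreover have "w \<in> K" using K_add[OF uK wu] by simp
  ultimately have "w = 0" using K_pointed by blast
  then have "- u \<in> K" using wu by simp
  then have "u = 0" using uK K_pointed by blast
  then show False using x(2) l1 unfolding u_def by simp
qed

lemma spectral_radius_compare_of_factorizations:
  assumes Q: "K_nonneg K Q" and Qb: "K_nonneg K Qb" and D: "K_nonneg K D" "spectral_radius D < 1"
    and Db: "K_nonneg K Db" "K_ge K Db D" "spectral_radius Db < 1"
    and XY: "X ** Y = mat 1" "Y ** X = mat 1" and Y: "K_nonneg K Y"
    and fact: "mat 1 - Q = X ** (mat 1 - D)" and factb: "mat 1 - Qb = X ** (mat 1 - Db)"
  shows "spectral_radius Q \<le> spectral_radius Qb \<and> spectral_radius Qb < 1"
proof -
  have "Y ** (mat 1 - Q) = mat 1 - D" and "Y ** (mat 1 - Qb) = mat 1 - Db"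
    unfolding fact factb by (simp_all add: matrix_mul_assoc XY(2))
  then have "spectral_radius Q < 1" and "spectral_radius Qb < 1"
    using spectral_radius_lt_1_of_factorization Q Qb D Db(1,3) Y by blast+
  then show ?thesis using spectral_radius_le_of_factorization[OF Q _ Qb Db XY Y fact factb] by blast
qed

end

section \<open>Two-stage iteration matrices\<close>

definition two_stage_matrix :: "real^'n^'n \<Rightarrow> real^'n^'n \<Rightarrow> real^'n^'n \<Rightarrow> nat \<Rightarrow> real^'n^'n" where
  "two_stage_matrix F G V s =
     matpow (matrix_inv F ** G) s + (\<Sum>j<s. matpow (matrix_inv F ** G) j ** matrix_inv F ** V)"

lemma two_stage_matrix_similar:
  fixes F G V :: "real^'n^'n"
  assumes F: "invertible F"
  defines "P \<equiv> G ** matrix_inv F"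
  shows "F ** two_stage_matrix F G V s ** matrix_inv F
    = matpow P s + (\<Sum>j<s. matpow P j ** (V ** matrix_inv F))"
proof -
  have "matrix_inv F ** G = matrix_inv F ** P ** F"
    unfolding P_def by (simp add: matrix_mul_assoc matrix_inv_cancel_right[OF F])
  then have pow: "matpow (matrix_inv F ** G) j = matrix_inv F ** matpow P j ** F" for j
    using matpow_conj[OF matrix_inv_right[OF F] matrix_inv_left[OF F]] by simp
  show ?thesis
    unfolding two_stage_matrix_def pow
    by (simp add: matrix_add_ldistrib matrix_add_rdistrib matrix_sum_ldistrib matrix_sum_rdistrib
        matrix_mul_assoc matrix_inv_right[OF F] matrix_inv_cancel_right[OF F])
qed

lemma two_stage_factorization:
  fixes A U V F G :: "real^'n^'n"
  assumes A: "A = U - V" and UFG: "U = F - G" and U: "invertible U" and F: "invertible F"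
    and comm: "V ** matrix_inv F ** G = G ** matrix_inv F ** V"
  defines "P \<equiv> G ** matrix_inv F"
  shows "mat 1 - (matpow P s + (\<Sum>j<s. matpow P j ** (V ** matrix_inv F)))
    = (A ** matrix_inv U) ** (mat 1 - matpow P s)"
proof -
  define R where "R = V ** matrix_inv U"
  have UFi: "U ** matrix_inv F = mat 1 - P"
    unfolding P_def UFG by (simp add: matrix_diff_rdistrib matrix_inv_right[OF F])
  have VFi: "V ** matrix_inv F = R ** (mat 1 - P)"
    unfolding R_def UFi[symmetric] by (simp add: matrix_mul_assoc matrix_inv_cancel_right[OF U])
  have VFiU: "V ** matrix_inv F ** U = U ** matrix_inv F ** V"
    using comm unfolding UFG
    by (simp add: matrix_diff_ldistrib matrix_diff_rdistrib matrix_inv_cancel_right[OF F]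
        matrix_inv_right[OF F])
  have P_eq: "P = mat 1 - U ** matrix_inv F" using UFi by simp
  have "R ** P = R - V ** matrix_inv F"
    unfolding P_eq R_def by (simp add: matrix_diff_ldistrib matrix_mul_assoc
        matrix_inv_cancel_right[OF U])
  moreover have "P ** R = R - V ** matrix_inv F"
    unfolding P_eq R_def
    by (simp add: matrix_diff_rdistrib matrix_mul_assoc VFiU[symmetric] matrix_inv_cancel_right[OF
        U])
  ultimately have RP: "R ** P = P ** R" by simp
  have "(\<Sum>j<s. matpow P j ** (V ** matrix_inv F)) = (\<Sum>j<s. R ** matpow P j ** (mat 1 - P))"
    unfolding VFi by (simp add: matrix_mul_assoc matpow_commute[OF RP])
  also have "\<dots> = R ** ((\<Sum>j<s. matpow P j) ** (mat 1 - P))"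
    by (simp add: matrix_sum_ldistrib matrix_sum_rdistrib matrix_mul_assoc)
  finally have "(\<Sum>j<s. matpow P j ** (V ** matrix_inv F)) = R ** (mat 1 - matpow P s)"
    by (simp add: sum_matpow_mult_diff)
  moreover have "A ** matrix_inv U = mat 1 - R"
    unfolding A R_def by (simp add: matrix_diff_rdistrib matrix_inv_right[OF U])
  ultimately show ?thesis by (simp add: matrix_diff_ldistrib matrix_diff_rdistrib)
qed

context proper_cone_order
begin

lemma sum_matpow_apply_K:
  assumes P: "K_nonneg K P" and y: "y \<in> K" "y \<noteq> 0" and s: "1 \<le> s"
  shows "(\<Sum>j<s. matpow P j) *v y \<in> K" and "(\<Sum>j<s. matpow P j) *v y \<noteq> 0"
proof -
  obtain m where m: "s = Suc m" using s by (cases s) auto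
  define z where "z = (\<Sum>j<m. matpow P (Suc j) *v y)"
  have z: "z \<in> K" unfolding z_def using K_nonneg_matpow[OF P] y(1) unfolding K_nonneg_def
    by (intro K_sum) blast
  have "(\<Sum>j<s. matpow P j) *v y = y + z"
    unfolding m z_def
    by (simp add: sum.lessThan_Suc_shift matrix_vector_mult_sum_rdistrib
        matrix_vector_mult_add_rdistrib
        del: sum.lessThan_Suc)
  then show "(\<Sum>j<s. matpow P j) *v y \<in> K" and "(\<Sum>j<s. matpow P j) *v y \<noteq> 0"
    using K_add[OF y(1) z] K_add_nonzero[OF y z] by simp_all
qed

lemma weak_regular_II_matpow_spectral_radius_lt_1:
  assumes split: "K_weak_regular_splitting_II K U F G"
    and U: "invertible U" "K_nonneg K (matrix_inv U)" and s: "1 \<le> s"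
  shows "spectral_radius (matpow (G ** matrix_inv F) s) < 1"
proof (rule ccontr)
  define P where "P = G ** matrix_inv F"
  define \<nu> where "\<nu> = spectral_radius (matpow P s)"
  have UFG: "U = F - G" and F: "invertible F" "K_nonneg K (matrix_inv F)" and P: "K_nonneg K P"
    using split unfolding K_weak_regular_splitting_II_def P_def by auto
  assume "\<not> ?thesis"
  then have \<nu>1: "1 \<le> \<nu>" unfolding \<nu>_def P_def by simp
  obtain y where y: "y \<in> K" "y \<noteq> 0" "matpow P s *v y = \<nu> *\<^sub>R y"
    using krein_rutman(1)[OF K_nonneg_matpow[OF P]] unfolding \<nu>_def by blast
  define u where "u = matrix_inv F *v ((\<Sum>j<s. matpow P j) *v y)"
  have "U ** matrix_inv F = mat 1 - P"
    unfolding P_def UFG by (simp add: matrix_diff_rdistrib matrix_inv_right[OF F(1)])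
  then have "U *v u = ((mat 1 - P) ** (\<Sum>j<s. matpow P j)) *v y"
    unfolding u_def by (simp add: matrix_vector_mul_assoc matrix_mul_assoc)
  also have "\<dots> = (1 - \<nu>) *\<^sub>R y"
    unfolding diff_mult_sum_matpow matrix_vector_mult_mat_1_diff y(3) by (simp add: algebra_simps)
  finally have "u = (1 - \<nu>) *\<^sub>R (matrix_inv U *v y)"
    by (metis matrix_inv_left[OF U(1)] matrix_vector_mul_assoc matrix_vector_mul_lid
        matrix_vector_mult_scaleR)
  then have "- u = (\<nu> - 1) *\<^sub>R (matrix_inv U *v y)" by (simp add: algebra_simps)
  then have "- u \<in> K" using \<nu>1 U(2) y(1) unfolding K_nonneg_def by (auto intro!: K_scaleR)
  moreover have "u \<in> K" using sum_matpow_apply_K(1)[OF P y(1,2) s] F(2) unfolding u_def K_nonneg_def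
    by blast
  moreover have "u \<noteq> 0"
    using sum_matpow_apply_K(2)[OF P y(1,2) s] matrix_inv_right[OF F(1)]
    unfolding u_def by (metis matrix_vector_mul_assoc matrix_vector_mul_lid
        matrix_vector_mult_0_right)
  ultimately show False using K_pointed by blast
qed

lemma two_stage_splitting:
  assumes reg: "K_regular_splitting K A U V" and weak: "K_weak_regular_splitting_II K U F G"
    and comm: "V ** matrix_inv F ** G = G ** matrix_inv F ** V" and s: "1 \<le> s"
  defines "P \<equiv> G ** matrix_inv F"
    and "Q \<equiv> matpow (G ** matrix_inv F) s
      + (\<Sum>j<s. matpow (G ** matrix_inv F) j ** (V ** matrix_inv F))"
  shows "spectral_radius (two_stage_matrix F G V s) = spectral_radius Q"
    and "K_nonneg K Q" and "K_nonneg K (matpow P s)" and "spectral_radius (matpow P s) < 1"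
    and "mat 1 - Q = (A ** matrix_inv U) ** (mat 1 - matpow P s)"
proof -
  have A: "A = U - V" "invertible U" "K_nonneg K (matrix_inv U)" "K_nonneg K V"
    using reg unfolding K_regular_splitting_def by auto
  have F: "U = F - G" "invertible F" "K_nonneg K (matrix_inv F)" "K_nonneg K P"
    using weak unfolding K_weak_regular_splitting_II_def P_def by auto
  show "spectral_radius (two_stage_matrix F G V s) = spectral_radius Q"
    using spectral_radius_similar[OF F(2), of "two_stage_matrix F G V s"]
    unfolding two_stage_matrix_similar[OF F(2)] Q_def P_def by simp
  show "K_nonneg K (matpow P s)" using F(4) by (rule K_nonneg_matpow)
  show "K_nonneg K Q"
    unfolding Q_def P_def[symmetric] using F(3,4) A(4)
    by (intro K_nonneg_add K_nonneg_sum K_nonneg_mult K_nonneg_matpow)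
  show "spectral_radius (matpow P s) < 1"
    unfolding P_def by (rule weak_regular_II_matpow_spectral_radius_lt_1[OF weak A(2,3) s])
  show "mat 1 - Q = (A ** matrix_inv U) ** (mat 1 - matpow P s)"
    unfolding Q_def P_def by (rule two_stage_factorization[OF A(1) F(1) A(2) F(2) comm])
qed

end

theorem theorem3p8:
  fixes K :: "(real^'n) set" and A U V F G Fb Gb :: "real^'n^'n" and s :: nat
  assumes "proper_cone K"
    and "K_monotone K A"
    and "K_regular_splitting K A U V"
    and "K_nonneg K U"
    and "K_weak_regular_splitting_II K U F G"
    and "K_weak_regular_splitting_II K U Fb Gb"
    and "V ** matrix_inv F ** G = G ** matrix_inv F ** V"
    and "V ** matrix_inv Fb ** Gb = Gb ** matrix_inv Fb ** V"
    and "s \<ge> 1"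
    and "K_ge K (Gb ** matrix_inv Fb) (G ** matrix_inv F)"
  shows "spectral_radius
           (matpow (matrix_inv F ** G) s
             + (\<Sum>j<s. matpow (matrix_inv F ** G) j ** matrix_inv F ** V))
         \<le> spectral_radius
           (matpow (matrix_inv Fb ** Gb) s
             + (\<Sum>j<s. matpow (matrix_inv Fb ** Gb) j ** matrix_inv Fb ** V))
       \<and> spectral_radius
           (matpow (matrix_inv Fb ** Gb) s
             + (\<Sum>j<s. matpow (matrix_inv Fb ** Gb) j ** matrix_inv Fb ** V)) < 1"
proof -
  interpret proper_cone_order K by unfold_locales (rule assms(1))
  define X Y where "X = A ** matrix_inv U" and "Y = U ** matrix_inv A"
  have A: "invertible A" "K_nonneg K (matrix_inv A)" and U: "invertible U"
    using assms(2,3) unfolding K_monotone_def K_regular_splitting_def by auto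
  have XY: "X ** Y = mat 1" "Y ** X = mat 1"
    unfolding X_def Y_def
    by (simp_all add: matrix_mul_assoc matrix_inv_cancel_right[OF U] matrix_inv_cancel_right[OF
        A(1)]
        matrix_inv_right[OF A(1)] matrix_inv_right[OF U])
  have Y: "K_nonneg K Y" unfolding Y_def using assms(4) A(2) by (rule K_nonneg_mult)
  have P: "K_nonneg K (G ** matrix_inv F)"
    using assms(5) unfolding K_weak_regular_splitting_II_def by auto
  note S = two_stage_splitting[OF assms(3,5,7,9), folded X_def]
  note Sb = two_stage_splitting[OF assms(3,6,8,9), folded X_def]
  from spectral_radius_compare_of_factorizations
    [OF S(2) Sb(2) S(3,4) Sb(3) K_ge_matpow[OF P assms(10)] Sb(4) XY Y S(5) Sb(5)]
  show ?thesis using S(1) Sb(1) unfolding two_stage_matrix_def by simp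
qed

end
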